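(* Assume $A$ is almost periodic and (H2) holds. Let $\theta=\sup_{n\in\mathbb{Z}}(t_{n+1}-t_n)$. Let $\varepsilon>0$, $\tau\in\Gamma_\varepsilon\cap T(A,\varepsilon)$ and $p\in P_\tau(\varepsilon)$. Then there is $K'>0$ such that for all $n\in\mathbb{Z}$: (a) $|X(t_{n+p+1},u+\tau)-X(t_{n+1},u)|\le K'\varepsilon$ for all $u\in[t_n,t_{n+1}]$; (b) $|X(t+\tau,t_{n+p})-X(t,t_n)|\le K'\varepsilon$ for all $t\in[t_n,t_{n+1}]$; (c) $|X(t+\tau,s+\tau)-X(t,s)|\le K'\varepsilon$ for all $s,t\in\mathbb{R}$ with $|t-s|\le\theta$; (d) $|X(t_{n+p+1},t_{n+p})-X(t_{n+1},t_n)|\le K'\varepsilon$.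
   Context: Let $q\in\mathbb{N}$; $|\cdot|$ is the Euclidean norm on finite-dimensional spaces (for matrices, of the array of entries). Fix a real sequence $(t_n)_{n\in\mathbb{Z}}$ with $t_n<t_{n+1}$ and $t_n\to\pm\infty$ as $n\to\pm\infty$; $t^{(k)}_n=t_{n+k}-t_n$. Let $A:\mathbb{R}\to M_q(\mathbb{C})$ be locally integrable, $X$ a fundamental matrix of $x'=A(t)x$, $X(t,s)=X(t)X(s)^{-1}$. A set is relatively dense if there is $l>0$ such that it meets every interval $[m,m+l]$. A continuous $g$ is almost periodic if for every $\varepsilon>0$ the set $T(g,\varepsilon)=\{\tau\in\mathbb{R}:|g(t+\tau)-g(t)|\le\varepsilon\ \forall t\in\mathbb{R}\}$ is relatively dense. (H2): for every $\varepsilon>0$ the set $\bigcap_{k\in\mathbb{N}}\{T\in\mathbb{Z}:|t^{(k)}_{T+n}-t^{(k)}_n|\le\varepsilon\ \forall n\in\mathbb{Z}\}$ is relatively dense. For $\varepsilon>0$, $\Gamma_\varepsilon$ is the set of $r\in\mathbb{R}$ for which there is $k\in\mathbb{Z}$ with $\sup_{n\in\mathbb{Z}}|t^{(k)}_n-r|\le\varepsilon$, and for $r\in\mathbb{R}$, $P_r(\varepsilon)$ is the set of all $k\in\mathbb{Z}$ with $\sup_{n\in\mathbb{Z}}|t^{(k)}_n-r|\le\varepsilon$. *)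

theory Defs
  imports "HOL-Analysis.Analysis"
begin

text \<open>Matrices in M_q(C) are rendered as complex ^'q ^'q; the library norm on this type
  is the Euclidean (Frobenius) norm of the array of entries.\<close>

definition rel_dense :: "real set \<Rightarrow> bool" where
  "rel_dense S \<longleftrightarrow> (\<exists>l>0. \<forall>m::real. \<exists>x\<in>S. m \<le> x \<and> x \<le> m + l)"

definition eps_periods :: "(real \<Rightarrow> 'a::real_normed_vector) \<Rightarrow> real \<Rightarrow> real set" where
  "eps_periods g \<epsilon> = {\<tau>. \<forall>t. norm (g (t + \<tau>) - g t) \<le> \<epsilon>}"

definition almost_periodic :: "(real \<Rightarrow> 'a::real_normed_vector) \<Rightarrow> bool" where
  "almost_periodic g \<longleftrightarrow> continuous_on UNIV g \<and> (\<forall>\<epsilon>>0. rel_dense (eps_periods g \<epsilon>))"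

definition tk :: "(int \<Rightarrow> real) \<Rightarrow> int \<Rightarrow> int \<Rightarrow> real" where
  "tk t k n = t (n + k) - t n"

definition H2 :: "(int \<Rightarrow> real) \<Rightarrow> bool" where
  "H2 t \<longleftrightarrow> (\<forall>\<epsilon>>0. rel_dense (of_int ` (\<Inter>k::nat.
      {T::int. \<forall>n. \<bar>tk t (int k) (T + n) - tk t (int k) n\<bar> \<le> \<epsilon>})))"

definition Gamma_set :: "(int \<Rightarrow> real) \<Rightarrow> real \<Rightarrow> real set" where
  "Gamma_set t \<epsilon> = {r. \<exists>k::int. \<forall>n. \<bar>tk t k n - r\<bar> \<le> \<epsilon>}"

definition P_set :: "(int \<Rightarrow> real) \<Rightarrow> real \<Rightarrow> real \<Rightarrow> int set" where
  "P_set t r \<epsilon> = {k. \<forall>n. \<bar>tk t k n - r\<bar> \<le> \<epsilon>}"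

definition locally_integrable :: "(real \<Rightarrow> 'a::euclidean_space) \<Rightarrow> bool" where
  "locally_integrable A \<longleftrightarrow> (\<forall>a b. A integrable_on {a..b})"

text \<open>Fundamental matrix of x' = A(t) x (Caratheodory sense, integral form):
  X is continuous, invertible everywhere, and X b - X a = integral of A X over [a,b].\<close>
definition fundamental_matrix ::
  "(real \<Rightarrow> complex^'q^'q) \<Rightarrow> (real \<Rightarrow> complex^'q^'q) \<Rightarrow> bool" where
  "fundamental_matrix A X \<longleftrightarrow> continuous_on UNIV X \<and> (\<forall>t. invertible (X t)) \<and>
     (\<forall>a b. a \<le> b \<longrightarrow> ((\<lambda>s. A s ** X s) has_integral (X b - X a)) {a..b})"

definition transition :: "(real \<Rightarrow> complex^'q^'q) \<Rightarrow> real \<Rightarrow> real \<Rightarrow> complex^'q^'q" where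
  "transition X t s = X t ** matrix_inv (X s)"

end

theory Submission
  imports Defs
begin

text \<open>The transition matrices \<open>\<Phi> t s = X t X(s)\<^sup>-\<^sup>1\<close> solve
  \<open>\<Phi> t s = I + \<integral>[s,t] A w \<Phi> w s dw\<close>, and the almost periodic \<open>A\<close> is bounded by some \<open>M\<close>.
  On a window of width \<open>1/(2M)\<close> the integral equation gives \<open>sup |\<Phi>| \<le> |I| + sup |\<Phi>| / 2\<close>,
  so \<open>\<Phi>\<close> is locally bounded, and the cocycle identity \<open>\<Phi> r s = \<Phi> r m \<Phi> m s\<close> carries the
  bound to every strip \<open>|r - s| \<le> L\<close>. The same two steps apply to the shift defect
  \<open>\<Phi> (r + \<tau>) (s + \<tau>) - \<Phi> r s\<close>: its integrand differs from the one for \<open>\<Phi>\<close> by at most \<open>\<epsilon>\<close>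
  when \<open>\<tau>\<close> is an \<open>\<epsilon>\<close>-period of \<open>A\<close>, so it is bounded by \<open>K \<epsilon>\<close> on strips. Finally,
  \<open>p \<in> P\<^sub>\<tau>(\<epsilon>)\<close> puts \<open>t (n + p)\<close> within \<open>\<epsilon>\<close> of \<open>t n + \<tau>\<close>, so each difference in the
  theorem is the shift defect plus two factors \<open>\<Phi> a b - I\<close> with \<open>|a - b| \<le> \<epsilon>\<close>, which are
  \<open>O(\<epsilon>)\<close> by the integral equation.\<close>

lemma power2_norm_vec: "(norm (x::'a::real_normed_vector^'n))\<^sup>2 = (\<Sum>i\<in>UNIV. (norm (x$i))\<^sup>2)"
  by (simp add: norm_vec_def L2_set_def sum_nonneg)

lemma norm_matrix_mult_le:
  fixes A :: "'a::real_normed_div_algebra^'n^'m" and B :: "'a^'p^'n"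
  shows "norm (A ** B) \<le> norm A * norm B"
proof -
  have entry: "(norm ((A ** B)$i$j))\<^sup>2 \<le> (\<Sum>k\<in>UNIV. (norm (A$i$k))\<^sup>2) * (\<Sum>k\<in>UNIV. (norm (B$k$j))\<^sup>2)"
    for i j
  proof -
    have "norm ((A ** B)$i$j) \<le> (\<Sum>k\<in>UNIV. \<bar>norm (A$i$k)\<bar> * \<bar>norm (B$k$j)\<bar>)"
      unfolding matrix_matrix_mult_def by (auto intro: order_trans[OF norm_sum] simp: norm_mult)
    also have "\<dots> \<le> L2_set (\<lambda>k. norm (A$i$k)) UNIV * L2_set (\<lambda>k. norm (B$k$j)) UNIV"
      by (rule L2_set_mult_ineq)
    finally have "(norm ((A ** B)$i$j))\<^sup>2
        \<le> (L2_set (\<lambda>k. norm (A$i$k)) UNIV * L2_set (\<lambda>k. norm (B$k$j)) UNIV)\<^sup>2"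
      by (simp add: power_mono)
    then show ?thesis by (simp add: power_mult_distrib L2_set_def sum_nonneg)
  qed
  have "(norm (A ** B))\<^sup>2 \<le> (\<Sum>i\<in>UNIV. \<Sum>j\<in>UNIV.
      (\<Sum>k\<in>UNIV. (norm (A$i$k))\<^sup>2) * (\<Sum>k\<in>UNIV. (norm (B$k$j))\<^sup>2))"
    unfolding power2_norm_vec by (intro sum_mono entry)
  also have "\<dots> = (\<Sum>i\<in>UNIV. \<Sum>k\<in>UNIV. (norm (A$i$k))\<^sup>2) * (\<Sum>j\<in>UNIV. \<Sum>k\<in>UNIV. (norm (B$k$j))\<^sup>2)"
    by (simp add: sum_product)
  also have "\<dots> = (norm A * norm B)\<^sup>2"
    unfolding power_mult_distrib power2_norm_vec by (subst (2) sum.swap) simp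
  finally show ?thesis by (rule power2_le_imp_le) simp
qed

lemma norm_matrix_mult_le_mult:
  fixes A :: "'a::real_normed_div_algebra^'n^'m" and B :: "'a^'p^'n"
  assumes "norm A \<le> a" and "norm B \<le> b"
  shows "norm (A ** B) \<le> a * b"
proof -
  have "0 \<le> a" using assms(1) norm_ge_zero order_trans by blast
  from mult_mono[OF assms this norm_ge_zero] show ?thesis
    using norm_matrix_mult_le[of A B] by linarith
qed

lemma bounded_bilinear_matrix_mult:
  "bounded_bilinear ((**) :: 'a::real_normed_div_algebra^'n^'m \<Rightarrow> 'a^'p^'n \<Rightarrow> 'a^'p^'m)"
  by (rule bounded_bilinear.intro, rule_tac [5] exI[of _ 1], simp_all add: norm_matrix_mult_le)
     (simp_all add: matrix_matrix_mult_def vec_eq_iff sum.distrib distrib_left distrib_right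
        scaleR_sum_right)

lemmas matrix_mult_diff_left = bounded_bilinear.diff_left[OF bounded_bilinear_matrix_mult]
  and matrix_mult_diff_right = bounded_bilinear.diff_right[OF bounded_bilinear_matrix_mult]
  and bounded_linear_matrix_mult_left = bounded_bilinear.bounded_linear_left[OF bounded_bilinear_matrix_mult]

lemma norm_diff_le_of_has_integral:
  fixes F f :: "real \<Rightarrow> 'a::real_normed_vector"
  assumes integral: "\<And>a b. a \<le> b \<Longrightarrow> (f has_integral (F b - F a)) {a..b}"
    and bound: "\<And>w. min s v \<le> w \<Longrightarrow> w \<le> max s v \<Longrightarrow> norm (f w) \<le> B"
    and "0 \<le> B"
  shows "norm (F v - F s) \<le> B * \<bar>v - s\<bar>"
proof (cases "s \<le> v")
  case True
  with has_integral_bound[OF \<open>0 \<le> B\<close>, of f "F v - F s" s v] integral bound show ?thesis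
    by simp
next
  case False
  with has_integral_bound[OF \<open>0 \<le> B\<close>, of f "F s - F v" v s] integral[of v s] bound show ?thesis
    by (simp add: norm_minus_commute)
qed

lemma norm_le_of_self_improving_bound:
  fixes G :: "'a::topological_space \<Rightarrow> 'b::real_normed_vector"
  assumes "compact K" "K \<noteq> {}" "continuous_on K G"
    and improve: "\<And>S v. \<forall>w\<in>K. norm (G w) \<le> S \<Longrightarrow> v \<in> K \<Longrightarrow> norm (G v) \<le> \<alpha> + S / 2"
    and "v \<in> K"
  shows "norm (G v) \<le> 2 * \<alpha>"
proof -
  obtain x where "x \<in> K" and max: "\<forall>y\<in>K. norm (G y) \<le> norm (G x)"
    using continuous_attains_sup[of K "\<lambda>v. norm (G v)"] assms(1-3)
    by (auto intro: continuous_on_norm)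
  with improve[OF max] have "norm (G x) \<le> 2 * \<alpha>" by fastforce
  with max \<open>v \<in> K\<close> show ?thesis by (meson order_trans)
qed

lemma split_distance:
  fixes r s h n :: real
  assumes "0 \<le> n" and "\<bar>r - s\<bar> \<le> (n + 1) * h"
  shows "\<exists>m. \<bar>r - m\<bar> \<le> n * h \<and> \<bar>m - s\<bar> \<le> h"
proof (intro exI conjI)
  define m where "m = s + (r - s) / (n + 1)"
  have "r - m = (r - s) * (n / (n + 1))" and "m - s = (r - s) / (n + 1)"
    using \<open>0 \<le> n\<close> by (simp_all add: m_def field_simps)
  then have "\<bar>r - m\<bar> = \<bar>r - s\<bar> * (n / (n + 1))" and "\<bar>m - s\<bar> = \<bar>r - s\<bar> / (n + 1)"
    using \<open>0 \<le> n\<close> by (simp_all add: abs_mult)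
  moreover have "\<bar>r - s\<bar> * n \<le> (n + 1) * h * n"
    using assms by (simp add: mult_right_mono)
  ultimately show "\<bar>r - m\<bar> \<le> n * h" and "\<bar>m - s\<bar> \<le> h"
    using assms by (simp_all add: divide_le_eq algebra_simps)
qed

lemma bound_on_strip_by_chaining:
  fixes f :: "'i \<Rightarrow> real \<Rightarrow> real \<Rightarrow> real"
  assumes "0 < h"
    and local: "\<And>i r s. i \<in> I \<Longrightarrow> \<bar>r - s\<bar> \<le> h \<Longrightarrow> f i r s \<le> B"
    and chain: "\<And>L C. (\<And>i r s. i \<in> I \<Longrightarrow> \<bar>r - s\<bar> \<le> L \<Longrightarrow> f i r s \<le> C) \<Longrightarrow>
      \<exists>C'. \<forall>i\<in>I. \<forall>r m s. \<bar>r - m\<bar> \<le> L \<longrightarrow> \<bar>m - s\<bar> \<le> h \<longrightarrow> f i r s \<le> C'"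
  shows "\<exists>C\<ge>0. \<forall>i\<in>I. \<forall>r s. \<bar>r - s\<bar> \<le> L \<longrightarrow> f i r s \<le> C"
proof -
  have strip: "\<exists>C. \<forall>i\<in>I. \<forall>r s. \<bar>r - s\<bar> \<le> (real k + 1) * h \<longrightarrow> f i r s \<le> C" for k :: nat
  proof (induction k)
    case 0
    show ?case using local by auto
  next
    case (Suc k)
    then obtain C where "\<And>i r s. i \<in> I \<Longrightarrow> \<bar>r - s\<bar> \<le> (real k + 1) * h \<Longrightarrow> f i r s \<le> C"
      by blast
    from chain[OF this] obtain C' where
      C': "\<forall>i\<in>I. \<forall>r m s. \<bar>r - m\<bar> \<le> (real k + 1) * h \<longrightarrow> \<bar>m - s\<bar> \<le> h \<longrightarrow> f i r s \<le> C'"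
      by blast
    show ?case
    proof (intro exI ballI allI impI)
      fix i r s assume "i \<in> I" and "\<bar>r - s\<bar> \<le> (real (Suc k) + 1) * h"
      then obtain m where "\<bar>r - m\<bar> \<le> (real k + 1) * h" and "\<bar>m - s\<bar> \<le> h"
        using split_distance[of "real k + 1" r s h] by auto
      with C' \<open>i \<in> I\<close> show "f i r s \<le> C'" by blast
    qed
  qed
  obtain C where C: "\<forall>i\<in>I. \<forall>r s. \<bar>r - s\<bar> \<le> (real (nat \<lceil>L / h\<rceil>) + 1) * h \<longrightarrow> f i r s \<le> C"
    using strip by blast
  have "L / h \<le> real (nat \<lceil>L / h\<rceil>) + 1" by linarith
  then have L: "L \<le> (real (nat \<lceil>L / h\<rceil>) + 1) * h"
    using \<open>0 < h\<close> by (simp add: divide_le_eq)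
  show ?thesis
  proof (intro exI[of _ "max C 0"] conjI ballI allI impI)
    fix i r s assume "i \<in> I" and "\<bar>r - s\<bar> \<le> L"
    with C L have "f i r s \<le> C" by auto
    then show "f i r s \<le> max C 0" by simp
  qed simp
qed

lemma almost_periodic_imp_bounded:
  fixes g :: "real \<Rightarrow> 'a::real_normed_vector"
  assumes "almost_periodic g"
  shows "\<exists>M>0. \<forall>t. norm (g t) \<le> M"
proof -
  have cont: "continuous_on UNIV g" and "rel_dense (eps_periods g 1)"
    using assms by (auto simp: almost_periodic_def)
  then obtain l where l: "\<And>m. \<exists>x\<in>eps_periods g 1. m \<le> x \<and> x \<le> m + l"
    unfolding rel_dense_def by blast
  have "compact (g ` {0..l})"
    by (rule compact_continuous_image) (auto intro: continuous_on_subset[OF cont])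
  then obtain B where B: "\<And>y. y \<in> g ` {0..l} \<Longrightarrow> norm y \<le> B"
    by (meson bounded_iff compact_imp_bounded)
  show ?thesis
  proof (intro exI[of _ "\<bar>B\<bar> + 1"] conjI allI)
    fix t
    obtain x where x: "x \<in> eps_periods g 1" "-t \<le> x" "x \<le> -t + l"
      using l[of "-t"] by blast
    then have "norm (g (t + x) - g t) \<le> 1" and "norm (g (t + x)) \<le> B"
      using B by (auto simp: eps_periods_def)
    then show "norm (g t) \<le> \<bar>B\<bar> + 1"
      using norm_triangle_sub[of "g t" "g (t + x)"] by (simp add: norm_minus_commute)
  qed simp
qed

lemma H2_imp_bdd_above_gaps:
  assumes "H2 t"
  shows "bdd_above (range (\<lambda>n. t (n + 1) - t n))"
proof -
  define S where "S = (\<Inter>k::nat. {T::int. \<forall>n. \<bar>tk t (int k) (T + n) - tk t (int k) n\<bar> \<le> 1})"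
  have "rel_dense (of_int ` S)"
    using assms unfolding H2_def S_def by simp
  then obtain l where l: "\<And>m. \<exists>x\<in>real_of_int ` S. m \<le> x \<and> x \<le> m + l"
    unfolding rel_dense_def by blast
  define G where "G = Max ((\<lambda>j. t (j + 1) - t j) ` {0..\<lceil>l\<rceil>})"
  show ?thesis unfolding bdd_above_def
  proof (intro exI[of _ "G + 1"] ballI, clarify)
    fix n
    obtain T where "T \<in> S" and T: "- real_of_int n \<le> of_int T" "of_int T \<le> - real_of_int n + l"
      using l[of "- of_int n"] by blast
    then have "\<bar>tk t (int 1) (T + n) - tk t (int 1) n\<bar> \<le> 1"
      unfolding S_def by blast
    moreover have "t (T + n + 1) - t (T + n) \<le> G"
    proof -
      have "T + n \<in> {0..\<lceil>l\<rceil>}" using T by (auto, linarith)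
      then show ?thesis unfolding G_def by (intro Max_ge) auto
    qed
    ultimately show "t (n + 1) - t n \<le> G + 1"
      by (simp add: tk_def algebra_simps)
  qed
qed

locale fundamental_system =
  fixes A X :: "real \<Rightarrow> complex^'q^'q"
  assumes fundamental: "fundamental_matrix A X"
begin

abbreviation \<Phi> :: "real \<Rightarrow> real \<Rightarrow> complex^'q^'q"
  where "\<Phi> \<equiv> transition X"

lemma fundamental_matrix_inverse: "X s ** matrix_inv (X s) = mat 1 \<and> matrix_inv (X s) ** X s = mat 1"
proof -
  have "invertible (X s)" using fundamental by (simp add: fundamental_matrix_def)
  then show ?thesis unfolding invertible_def matrix_inv_def by (rule someI_ex)
qed

lemma transition_self: "\<Phi> s s = mat 1"
  using fundamental_matrix_inverse by (simp add: transition_def)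

lemma transition_trans: "\<Phi> r m ** \<Phi> m s = \<Phi> r s"
proof -
  have "\<Phi> r m ** \<Phi> m s = X r ** (matrix_inv (X m) ** X m) ** matrix_inv (X s)"
    by (simp add: transition_def matrix_mul_assoc)
  then show ?thesis by (simp add: fundamental_matrix_inverse transition_def)
qed

lemma transition_has_integral:
  assumes "a \<le> b"
  shows "((\<lambda>w. A w ** \<Phi> w s) has_integral (\<Phi> b s - \<Phi> a s)) {a..b}"
proof -
  have "((\<lambda>w. A w ** X w) has_integral (X b - X a)) {a..b}"
    using fundamental assms by (simp add: fundamental_matrix_def)
  from has_integral_linear[OF this bounded_linear_matrix_mult_left] show ?thesis
    by (simp add: o_def transition_def matrix_mul_assoc matrix_mult_diff_left)
qed

lemma continuous_on_transition: "continuous_on S (\<lambda>v. \<Phi> v s)"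
proof -
  have "continuous_on S X"
    using fundamental continuous_on_subset by (fastforce simp: fundamental_matrix_def)
  then show ?thesis unfolding transition_def
    by (rule bounded_linear.continuous_on[OF bounded_linear_matrix_mult_left])
qed

definition shift_defect :: "real \<Rightarrow> real \<Rightarrow> real \<Rightarrow> complex^'q^'q"
  where "shift_defect \<tau> r s = \<Phi> (r + \<tau>) (s + \<tau>) - \<Phi> r s"

lemma shift_defect_self: "shift_defect \<tau> s s = 0"
  by (simp add: shift_defect_def transition_self)

lemma shift_defect_split:
  "shift_defect \<tau> r s = shift_defect \<tau> r m ** \<Phi> (m + \<tau>) (s + \<tau>) + \<Phi> r m ** shift_defect \<tau> m s"
  by (simp add: shift_defect_def transition_trans matrix_mult_diff_left matrix_mult_diff_right)

lemma shift_defect_has_integral: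
  assumes "a \<le> b"
  shows "((\<lambda>w. A (w + \<tau>) ** \<Phi> (w + \<tau>) (s + \<tau>) - A w ** \<Phi> w s)
    has_integral (shift_defect \<tau> b s - shift_defect \<tau> a s)) {a..b}"
proof -
  have "((\<lambda>w. A w ** \<Phi> w (s + \<tau>)) has_integral (\<Phi> (b + \<tau>) (s + \<tau>) - \<Phi> (a + \<tau>) (s + \<tau>)))
      {a + \<tau>..b + \<tau>}"
    using assms by (intro transition_has_integral) simp
  then have "((\<lambda>w. A (w + \<tau>) ** \<Phi> (w + \<tau>) (s + \<tau>))
      has_integral (\<Phi> (b + \<tau>) (s + \<tau>) - \<Phi> (a + \<tau>) (s + \<tau>))) {a..b}"
    using has_integral_shift_Icc_real[of "\<lambda>w. A w ** \<Phi> w (s + \<tau>)" \<tau> _ a b]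
    by (simp add: o_def add.commute)
  from has_integral_diff[OF this transition_has_integral[OF assms, of s]] show ?thesis
    by (simp add: shift_defect_def algebra_simps)
qed

lemma continuous_on_shift_defect: "continuous_on S (\<lambda>v. shift_defect \<tau> v s)"
  unfolding shift_defect_def
  by (intro continuous_on_diff continuous_on_transition
      continuous_on_compose2[OF continuous_on_transition[of UNIV]] continuous_intros) auto

end

locale bounded_fundamental_system = fundamental_system A X
  for A X :: "real \<Rightarrow> complex^'q^'q" +
  fixes M :: real
  assumes coefficient_bound: "norm (A t) \<le> M"
    and M_pos: "0 < M"
begin

definition \<delta> :: real where "\<delta> = 1 / (2 * M)"

lemma \<delta>_pos: "0 < \<delta>" and M_mult_\<delta>: "M * \<delta> = 1 / 2"
  using M_pos by (simp_all add: \<delta>_def)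

lemma norm_transition_minus_id_le:
  assumes "0 \<le> C" and "\<And>w. min a b \<le> w \<Longrightarrow> w \<le> max a b \<Longrightarrow> norm (\<Phi> w b) \<le> C"
  shows "norm (\<Phi> a b - mat 1) \<le> M * C * \<bar>a - b\<bar>"
proof -
  have "norm (\<Phi> a b - \<Phi> b b) \<le> M * C * \<bar>a - b\<bar>"
  proof (rule norm_diff_le_of_has_integral[where f = "\<lambda>w. A w ** \<Phi> w b"])
    show "norm (A w ** \<Phi> w b) \<le> M * C" if "min b a \<le> w" "w \<le> max b a" for w
      using that assms coefficient_bound
      by (intro norm_matrix_mult_le_mult) (auto simp: min.commute max.commute)
  qed (use assms M_pos in \<open>auto intro: transition_has_integral\<close>)
  then show ?thesis by (simp add: transition_self)
qed

lemma norm_transition_local: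
  assumes "\<bar>v - s\<bar> \<le> \<delta>"
  shows "norm (\<Phi> v s) \<le> 2 * norm (mat 1 :: complex^'q^'q)"
proof (rule norm_le_of_self_improving_bound[where K = "{s - \<delta>..s + \<delta>}" and G = "\<lambda>v. \<Phi> v s"])
  fix S v assume S: "\<forall>w\<in>{s - \<delta>..s + \<delta>}. norm (\<Phi> w s) \<le> S" and v: "v \<in> {s - \<delta>..s + \<delta>}"
  have "0 \<le> S" using S[rule_format, of s] \<delta>_pos by (simp add: order_trans[OF norm_ge_zero])
  have "norm (\<Phi> v s - mat 1) \<le> M * S * \<bar>v - s\<bar>"
  proof (rule norm_transition_minus_id_le[OF \<open>0 \<le> S\<close>])
    fix w assume "min v s \<le> w" "w \<le> max v s"
    with v have "w \<in> {s - \<delta>..s + \<delta>}" by auto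
    with S show "norm (\<Phi> w s) \<le> S" by blast
  qed
  also have "\<dots> \<le> M * S * \<delta>"
    using v M_pos \<open>0 \<le> S\<close> by (intro mult_left_mono) (auto simp: abs_le_iff)
  also have "\<dots> = S / 2" using M_mult_\<delta> by (simp add: algebra_simps)
  finally show "norm (\<Phi> v s) \<le> norm (mat 1 :: complex^'q^'q) + S / 2"
    using norm_triangle_sub[of "\<Phi> v s" "mat 1"] by linarith
qed (use assms \<delta>_pos in \<open>auto simp: abs_le_iff intro: continuous_on_transition\<close>)

lemma transition_strip_bound: "\<exists>C\<ge>0. \<forall>r s. \<bar>r - s\<bar> \<le> L \<longrightarrow> norm (\<Phi> r s) \<le> C"
proof -
  have "\<exists>C\<ge>0. \<forall>i\<in>{()}. \<forall>r s. \<bar>r - s\<bar> \<le> L \<longrightarrow> norm (\<Phi> r s) \<le> C"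
  proof (rule bound_on_strip_by_chaining[OF \<delta>_pos])
    fix L C
    assume C: "\<And>i r s. i \<in> {()} \<Longrightarrow> \<bar>r - s\<bar> \<le> L \<Longrightarrow> norm (\<Phi> r s) \<le> C"
    have "norm (\<Phi> r s) \<le> C * (2 * norm (mat 1 :: complex^'q^'q))"
      if "\<bar>r - m\<bar> \<le> L" "\<bar>m - s\<bar> \<le> \<delta>" for r m s
      using norm_matrix_mult_le_mult[OF C[of "()" r m] norm_transition_local[of m s]] that
      by (simp add: transition_trans)
    then show "\<exists>C'. \<forall>i\<in>{()}. \<forall>r m s. \<bar>r - m\<bar> \<le> L \<longrightarrow> \<bar>m - s\<bar> \<le> \<delta> \<longrightarrow> norm (\<Phi> r s) \<le> C'"
      by blast
  qed (rule norm_transition_local)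
  then show ?thesis by simp
qed

lemma norm_shift_defect_local:
  assumes "\<tau> \<in> eps_periods A \<epsilon>" and "\<bar>v - s\<bar> \<le> \<delta>"
  shows "norm (shift_defect \<tau> v s) \<le> 2 * (norm (mat 1 :: complex^'q^'q) / M * \<epsilon>)"
proof (rule norm_le_of_self_improving_bound[where K = "{s - \<delta>..s + \<delta>}" and G = "\<lambda>v. shift_defect \<tau> v s"])
  have period: "norm (A (w + \<tau>) - A w) \<le> \<epsilon>" for w
    using assms(1) by (simp add: eps_periods_def)
  then have "0 \<le> \<epsilon>" by (meson norm_ge_zero order_trans)
  fix S v assume S: "\<forall>w\<in>{s - \<delta>..s + \<delta>}. norm (shift_defect \<tau> w s) \<le> S"
    and v: "v \<in> {s - \<delta>..s + \<delta>}"
  have "0 \<le> S" using S[rule_format, of s] \<delta>_pos by (simp add: order_trans[OF norm_ge_zero])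
  let ?B = "M * S + \<epsilon> * (2 * norm (mat 1 :: complex^'q^'q))"
  have "norm (shift_defect \<tau> v s - shift_defect \<tau> s s) \<le> ?B * \<bar>v - s\<bar>"
  proof (rule norm_diff_le_of_has_integral[OF shift_defect_has_integral])
    fix w assume "min s v \<le> w" "w \<le> max s v"
    with v have w: "w \<in> {s - \<delta>..s + \<delta>}" by auto
    have "A (w + \<tau>) ** \<Phi> (w + \<tau>) (s + \<tau>) - A w ** \<Phi> w s
        = A (w + \<tau>) ** shift_defect \<tau> w s + (A (w + \<tau>) - A w) ** \<Phi> w s"
      by (simp add: shift_defect_def matrix_mult_diff_left matrix_mult_diff_right)
    moreover have "norm (A (w + \<tau>) ** shift_defect \<tau> w s) \<le> M * S"
      using coefficient_bound S w by (intro norm_matrix_mult_le_mult) auto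
    moreover have "norm ((A (w + \<tau>) - A w) ** \<Phi> w s) \<le> \<epsilon> * (2 * norm (mat 1 :: complex^'q^'q))"
      using period norm_transition_local w by (intro norm_matrix_mult_le_mult) (auto simp: abs_le_iff)
    ultimately show "norm (A (w + \<tau>) ** \<Phi> (w + \<tau>) (s + \<tau>) - A w ** \<Phi> w s) \<le> ?B"
      by (metis add_mono norm_triangle_le)
  qed (use M_pos \<open>0 \<le> S\<close> \<open>0 \<le> \<epsilon>\<close> in auto)
  also have "\<dots> \<le> ?B * \<delta>"
    using v M_pos \<open>0 \<le> S\<close> \<open>0 \<le> \<epsilon>\<close> by (intro mult_left_mono) (auto simp: abs_le_iff)
  also have "\<dots> = norm (mat 1 :: complex^'q^'q) / M * \<epsilon> + S / 2"
    using M_pos by (simp add: \<delta>_def field_simps)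
  finally show "norm (shift_defect \<tau> v s) \<le> norm (mat 1 :: complex^'q^'q) / M * \<epsilon> + S / 2"
    by (simp add: shift_defect_self)
qed (use assms \<delta>_pos in \<open>auto simp: abs_le_iff intro: continuous_on_shift_defect\<close>)

lemma shift_defect_strip_bound:
  "\<exists>K\<ge>0. \<forall>\<tau> \<epsilon> r s. 0 < \<epsilon> \<longrightarrow> \<tau> \<in> eps_periods A \<epsilon> \<longrightarrow> \<bar>r - s\<bar> \<le> L \<longrightarrow>
     norm (shift_defect \<tau> r s) \<le> K * \<epsilon>"
proof -
  \<comment> \<open>Chaining uniformly over all pairs \<open>(\<tau>, \<epsilon>)\<close>, with the defect measured relative to \<open>\<epsilon>\<close>,
    makes \<open>K\<close> independent of \<open>\<tau>\<close> and \<open>\<epsilon>\<close>.\<close>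
  let ?N = "norm (mat 1 :: complex^'q^'q)"
  let ?I = "{(\<tau>, \<epsilon>). 0 < \<epsilon> \<and> \<tau> \<in> eps_periods A \<epsilon>}"
  let ?f = "\<lambda>(\<tau>, \<epsilon>) r s. norm (shift_defect \<tau> r s) / \<epsilon>"
  have "\<exists>K\<ge>0. \<forall>i\<in>?I. \<forall>r s. \<bar>r - s\<bar> \<le> L \<longrightarrow> ?f i r s \<le> K"
  proof (rule bound_on_strip_by_chaining[OF \<delta>_pos])
    show "?f i r s \<le> 2 * (?N / M)" if "i \<in> ?I" "\<bar>r - s\<bar> \<le> \<delta>" for i r s
    proof -
      obtain \<tau> \<epsilon> where i: "i = (\<tau>, \<epsilon>)" "0 < \<epsilon>" "\<tau> \<in> eps_periods A \<epsilon>"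
        using \<open>i \<in> ?I\<close> by blast
      with norm_shift_defect_local[OF i(3) \<open>\<bar>r - s\<bar> \<le> \<delta>\<close>] show ?thesis
        by (simp add: pos_divide_le_eq mult.assoc)
    qed
  next
    fix L C assume C: "\<And>i r s. i \<in> ?I \<Longrightarrow> \<bar>r - s\<bar> \<le> L \<Longrightarrow> ?f i r s \<le> C"
    obtain C\<^sub>L where C\<^sub>L: "\<forall>r s. \<bar>r - s\<bar> \<le> L \<longrightarrow> norm (\<Phi> r s) \<le> C\<^sub>L"
      using transition_strip_bound by blast
    show "\<exists>C'. \<forall>i\<in>?I. \<forall>r m s. \<bar>r - m\<bar> \<le> L \<longrightarrow> \<bar>m - s\<bar> \<le> \<delta> \<longrightarrow> ?f i r s \<le> C'"
    proof (intro exI[of _ "C * (2 * ?N) + C\<^sub>L * (2 * (?N / M))"] ballI allI impI)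
      fix i r m s assume "i \<in> ?I" and rm: "\<bar>r - m\<bar> \<le> L" and ms: "\<bar>m - s\<bar> \<le> \<delta>"
      then obtain \<tau> \<epsilon> where i: "i = (\<tau>, \<epsilon>)" and "0 < \<epsilon>" and \<tau>: "\<tau> \<in> eps_periods A \<epsilon>"
        by blast
      have "norm (shift_defect \<tau> r m) \<le> C * \<epsilon>"
        using C[OF \<open>i \<in> ?I\<close> rm] \<open>0 < \<epsilon>\<close> by (simp add: i divide_le_eq)
      then have "norm (shift_defect \<tau> r m ** \<Phi> (m + \<tau>) (s + \<tau>)) \<le> C * \<epsilon> * (2 * ?N)"
        using ms by (intro norm_matrix_mult_le_mult norm_transition_local) simp_all
      moreover have "norm (\<Phi> r m ** shift_defect \<tau> m s) \<le> C\<^sub>L * (2 * (?N / M * \<epsilon>))"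
        using C\<^sub>L rm norm_shift_defect_local[OF \<tau> ms] by (intro norm_matrix_mult_le_mult) auto
      ultimately have "norm (shift_defect \<tau> r s)
          \<le> C * \<epsilon> * (2 * ?N) + C\<^sub>L * (2 * (?N / M * \<epsilon>))"
        unfolding shift_defect_split[of \<tau> r s m] by (rule order_trans[OF norm_triangle_ineq add_mono])
      also have "\<dots> = (C * (2 * ?N) + C\<^sub>L * (2 * (?N / M))) * \<epsilon>"
        by (simp add: algebra_simps)
      finally have "norm (shift_defect \<tau> r s) \<le> (C * (2 * ?N) + C\<^sub>L * (2 * (?N / M))) * \<epsilon>" .
      then show "?f i r s \<le> C * (2 * ?N) + C\<^sub>L * (2 * (?N / M))"
        using \<open>0 < \<epsilon>\<close> by (simp add: i divide_le_eq)
    qed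
  qed
  then obtain K where "0 \<le> K" and "\<forall>i\<in>?I. \<forall>r s. \<bar>r - s\<bar> \<le> L \<longrightarrow> ?f i r s \<le> K"
    by blast
  then show ?thesis
    by (intro exI[of _ K]) (auto simp: divide_le_eq)
qed

lemma norm_transition_near_shift_le:
  "\<exists>K\<ge>0. \<forall>\<tau> \<epsilon> x y x' y'. 0 < \<epsilon> \<longrightarrow> \<epsilon> \<le> \<rho> \<longrightarrow> \<tau> \<in> eps_periods A \<epsilon> \<longrightarrow>
     \<bar>x - y\<bar> \<le> L \<longrightarrow> \<bar>x' - (x + \<tau>)\<bar> \<le> \<epsilon> \<longrightarrow> \<bar>y' - (y + \<tau>)\<bar> \<le> \<epsilon> \<longrightarrow>
     norm (\<Phi> x' y' - \<Phi> x y) \<le> K * \<epsilon>"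
proof -
  obtain C\<^sub>0 where "0 \<le> C\<^sub>0" and C\<^sub>0: "\<forall>r s. \<bar>r - s\<bar> \<le> \<rho> \<longrightarrow> norm (\<Phi> r s) \<le> C\<^sub>0"
    using transition_strip_bound by blast
  obtain C\<^sub>1 where "0 \<le> C\<^sub>1" and C\<^sub>1: "\<forall>r s. \<bar>r - s\<bar> \<le> L + \<rho> \<longrightarrow> norm (\<Phi> r s) \<le> C\<^sub>1"
    using transition_strip_bound by blast
  obtain K where "0 \<le> K" and K: "\<forall>\<tau> \<epsilon> r s. 0 < \<epsilon> \<longrightarrow> \<tau> \<in> eps_periods A \<epsilon> \<longrightarrow> \<bar>r - s\<bar> \<le> L \<longrightarrow>
      norm (shift_defect \<tau> r s) \<le> K * \<epsilon>"
    using shift_defect_strip_bound by blast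
  have near_id: "norm (\<Phi> a b - mat 1) \<le> M * C\<^sub>0 * \<epsilon>" if "\<bar>a - b\<bar> \<le> \<epsilon>" "\<epsilon> \<le> \<rho>" for a b \<epsilon>
  proof -
    have "norm (\<Phi> a b - mat 1) \<le> M * C\<^sub>0 * \<bar>a - b\<bar>"
    proof (rule norm_transition_minus_id_le[OF \<open>0 \<le> C\<^sub>0\<close>])
      fix w assume "min a b \<le> w" "w \<le> max a b"
      with that have "\<bar>w - b\<bar> \<le> \<rho>" by (auto simp: abs_le_iff min_def max_def split: if_splits)
      with C\<^sub>0 show "norm (\<Phi> w b) \<le> C\<^sub>0" by blast
    qed
    also have "\<dots> \<le> M * C\<^sub>0 * \<epsilon>"
      using that M_pos \<open>0 \<le> C\<^sub>0\<close> by (intro mult_left_mono) auto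
    finally show ?thesis .
  qed
  show ?thesis
  proof (intro exI[of _ "2 * M * C\<^sub>0 * C\<^sub>1 + K"] conjI allI impI)
    fix \<tau> \<epsilon> x y x' y'
    assume "0 < \<epsilon>" "\<epsilon> \<le> \<rho>" "\<tau> \<in> eps_periods A \<epsilon>" "\<bar>x - y\<bar> \<le> L"
      and x': "\<bar>x' - (x + \<tau>)\<bar> \<le> \<epsilon>" and y': "\<bar>y' - (y + \<tau>)\<bar> \<le> \<epsilon>"
    have "\<Phi> x' y' - \<Phi> x y = (\<Phi> x' (x + \<tau>) - mat 1) ** \<Phi> (x + \<tau>) y'
        + \<Phi> (x + \<tau>) (y + \<tau>) ** (\<Phi> (y + \<tau>) y' - mat 1) + shift_defect \<tau> x y"
      by (simp add: shift_defect_def matrix_mult_diff_left matrix_mult_diff_right transition_trans)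
    moreover have "norm ((\<Phi> x' (x + \<tau>) - mat 1) ** \<Phi> (x + \<tau>) y') \<le> M * C\<^sub>0 * \<epsilon> * C\<^sub>1"
      using near_id x' y' C\<^sub>1 \<open>\<epsilon> \<le> \<rho>\<close> \<open>\<bar>x - y\<bar> \<le> L\<close>
      by (intro norm_matrix_mult_le_mult) (auto simp: abs_le_iff)
    moreover have "norm (\<Phi> (x + \<tau>) (y + \<tau>) ** (\<Phi> (y + \<tau>) y' - mat 1)) \<le> C\<^sub>1 * (M * C\<^sub>0 * \<epsilon>)"
      using near_id y' C\<^sub>1 \<open>0 < \<epsilon>\<close> \<open>\<epsilon> \<le> \<rho>\<close> \<open>\<bar>x - y\<bar> \<le> L\<close>
      by (intro norm_matrix_mult_le_mult) (auto simp: abs_le_iff)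
    moreover have "norm (shift_defect \<tau> x y) \<le> K * \<epsilon>"
      using K \<open>0 < \<epsilon>\<close> \<open>\<tau> \<in> eps_periods A \<epsilon>\<close> \<open>\<bar>x - y\<bar> \<le> L\<close> by blast
    ultimately have "norm (\<Phi> x' y' - \<Phi> x y) \<le> M * C\<^sub>0 * \<epsilon> * C\<^sub>1 + C\<^sub>1 * (M * C\<^sub>0 * \<epsilon>) + K * \<epsilon>"
      by (metis add_mono norm_triangle_le)
    then show "norm (\<Phi> x' y' - \<Phi> x y) \<le> (2 * M * C\<^sub>0 * C\<^sub>1 + K) * \<epsilon>"
      by (simp add: algebra_simps)
  qed (use M_pos \<open>0 \<le> C\<^sub>0\<close> \<open>0 \<le> C\<^sub>1\<close> \<open>0 \<le> K\<close> in simp)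
qed

end

theorem lemma6:
  fixes t :: "int \<Rightarrow> real" and A X :: "real \<Rightarrow> complex^'q^'q"
    and \<epsilon> \<tau> :: real and p :: int
  assumes t_mono: "\<And>n. t n < t (n + 1)"
    and t_top: "filterlim t at_top at_top"
    and t_bot: "filterlim t at_bot at_bot"
    and A_li: "locally_integrable A"
    and A_ap: "almost_periodic A"
    and fund: "fundamental_matrix A X"
    and h2: "H2 t"
    and eps: "\<epsilon> > 0"
    and tau: "\<tau> \<in> Gamma_set t \<epsilon> \<inter> eps_periods A \<epsilon>"
    and p: "p \<in> P_set t \<tau> \<epsilon>"
  shows "\<exists>K'>0.
     (\<forall>n. (\<forall>u\<in>{t n..t (n+1)}.
              norm (transition X (t (n+p+1)) (u + \<tau>) - transition X (t (n+1)) u) \<le> K' * \<epsilon>)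
         \<and> (\<forall>s\<in>{t n..t (n+1)}.
              norm (transition X (s + \<tau>) (t (n+p)) - transition X s (t n)) \<le> K' * \<epsilon>)
         \<and> norm (transition X (t (n+p+1)) (t (n+p)) - transition X (t (n+1)) (t n)) \<le> K' * \<epsilon>)
   \<and> (\<forall>s r. \<bar>r - s\<bar> \<le> (SUP n. t (n+1) - t n) \<longrightarrow>
              norm (transition X (r + \<tau>) (s + \<tau>) - transition X r s) \<le> K' * \<epsilon>)"
proof -
  obtain M where "0 < M" and "\<And>t. norm (A t) \<le> M"
    using almost_periodic_imp_bounded[OF A_ap] by blast
  with fund interpret bounded_fundamental_system A X M
    by unfold_locales auto
  define \<theta> where "\<theta> = (SUP n. t (n + 1) - t n)"
  have gap: "t (n + 1) - t n \<le> \<theta>" for n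
    unfolding \<theta>_def by (rule cSUP_upper) (use H2_imp_bdd_above_gaps[OF h2] in auto)
  obtain K where "0 \<le> K" and K: "\<forall>\<tau> \<epsilon>' x y x' y'. 0 < \<epsilon>' \<longrightarrow> \<epsilon>' \<le> \<epsilon> \<longrightarrow> \<tau> \<in> eps_periods A \<epsilon>' \<longrightarrow>
      \<bar>x - y\<bar> \<le> \<theta> \<longrightarrow> \<bar>x' - (x + \<tau>)\<bar> \<le> \<epsilon>' \<longrightarrow> \<bar>y' - (y + \<tau>)\<bar> \<le> \<epsilon>' \<longrightarrow>
      norm (transition X x' y' - transition X x y) \<le> K * \<epsilon>'"
    using norm_transition_near_shift_le[of \<epsilon> \<theta>] by blast
  have near: "norm (transition X x' y' - transition X x y) \<le> (K + 1) * \<epsilon>"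
    if "\<bar>x - y\<bar> \<le> \<theta>" "\<bar>x' - (x + \<tau>)\<bar> \<le> \<epsilon>" "\<bar>y' - (y + \<tau>)\<bar> \<le> \<epsilon>" for x y x' y'
    using K[rule_format, of \<epsilon> \<tau>] tau eps that by (fastforce intro: order_trans)
  have p_shift: "\<bar>t (n + p) - (t n + \<tau>)\<bar> \<le> \<epsilon>" for n
    using p by (simp add: P_set_def tk_def algebra_simps)
  show ?thesis
  proof (intro exI[of _ "K + 1"] conjI allI ballI impI)
    fix n u assume "u \<in> {t n..t (n + 1)}"
    with gap[of n] p_shift[of "n + 1"]
    show "norm (transition X (t (n + p + 1)) (u + \<tau>) - transition X (t (n + 1)) u) \<le> (K + 1) * \<epsilon>"
      by (intro near) (auto simp: add_ac)
  next
    fix n s assume "s \<in> {t n..t (n + 1)}"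
    with gap[of n] p_shift[of n]
    show "norm (transition X (s + \<tau>) (t (n + p)) - transition X s (t n)) \<le> (K + 1) * \<epsilon>"
      by (intro near) auto
  next
    fix n
    from gap[of n] t_mono[of n] p_shift[of n] p_shift[of "n + 1"]
    show "norm (transition X (t (n + p + 1)) (t (n + p)) - transition X (t (n + 1)) (t n)) \<le> (K + 1) * \<epsilon>"
      by (intro near) (auto simp: add_ac)
  next
    fix s r assume "\<bar>r - s\<bar> \<le> (SUP n. t (n + 1) - t n)"
    then show "norm (transition X (r + \<tau>) (s + \<tau>) - transition X r s) \<le> (K + 1) * \<epsilon>"
      using eps by (intro near) (auto simp: \<theta>_def)
  qed (use \<open>0 \<le> K\<close> in simp)
qed

end
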